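(* Let $n,m$ be positive integers, not both equal to $1$, with $n\equiv m \pmod 2$. Then \[\sum_{d=0}^{\min(n,m)}(-1)^{d+1}2^{2d-1}\frac{n+m-2d}{n+m-d}\cdot\frac{n+m-2d-1}{n+m-d-1}\binom{n+m-d}{n-d,\,m-d,\,d}\,C\bigl((n+m)/2-d-1\bigr)=\begin{cases}C(n/2-1)\,C(m/2-1)&\text{if } n,m \text{ are even},\\ 0&\text{if } n,m\text{ are odd.}\end{cases}\]
   Context: $C(j)=\frac{1}{j+1}\binom{2j}{j}$ is the $j$-th Catalan number. $\binom{s}{a,\,b,\,c}=\frac{s!}{a!\,b!\,c!}$ is the multinomial coefficient. A summand containing the factor $n+m-2d=0$ (which occurs only for $d=n=m$) is zero, so the undefined value $C(-1)$ never needs to be evaluated. *)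

theory Defs
  imports Complex_Main
begin

definition catalan :: "nat \<Rightarrow> real" where
  "catalan j = real ((2 * j) choose j) / real (j + 1)"

definition multinom3 :: "nat \<Rightarrow> nat \<Rightarrow> nat \<Rightarrow> nat \<Rightarrow> real" where
  "multinom3 s a b c = fact s / (fact a * fact b * fact c)"

end

theory Submission
  imports Defs
begin

text \<open>
  Write \<open>F(n, m, d)\<close> for the summand with its two quotients cleared, extended by zero to all
  \<open>d\<close>, and \<open>S(n, m) = \<Sum>\<^sub>d F(n, m, d)\<close>. For \<open>n + 1 + m\<close> even, Zeilberger's algorithm
  produces the certificate \<open>R = d (2d - 2n - m) / (n + m - 1 - d)\<close>: with
  \<open>G(d) = R F(n + 1, m, d)\<close> one has
  \<open>(n + 1) F(n + 1, m, d) - 4 (n - 2) F(n - 1, m, d) = G(d + 1) - G(d)\<close>, and summing over \<open>d\<close>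
  gives \<open>(n + 1) S(n + 1, m) = 4 (n - 2) S(n - 1, m)\<close>. The coefficients \<open>c(n)\<close> of
  \<open>-\<surd>(1 - 4x\<^sup>2) / 2\<close>, namely \<open>c(0) = -1/2\<close>, \<open>c(2j + 2) = C(j)\<close> and \<open>c(odd) = 0\<close>,
  obey the same recurrence, and \<open>S(0, m) = c(0) c(m)\<close>, \<open>S(1, m) = 0\<close> for \<open>m \<ge> 2\<close>.
  Hence \<open>S(n, m) = c(n) c(m)\<close>; the case \<open>m = 1\<close> follows by the symmetry of \<open>S\<close>.
\<close>

definition inv_fact :: "int \<Rightarrow> real" where
  "inv_fact k = (if k < 0 then 0 else 1 / fact (nat k))"

lemma inv_fact_of_nat: "inv_fact (int k) = 1 / fact k"
  by (simp add: inv_fact_def)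

lemma inv_fact_neg: "k < 0 \<Longrightarrow> inv_fact k = 0"
  by (simp add: inv_fact_def)

lemma inv_fact_rec: "inv_fact k = of_int (k + 1) * inv_fact (k + 1)"
proof (cases "k < 0")
  case True
  then show ?thesis by (cases "k = -1") (simp_all add: inv_fact_def)
next
  case False
  then obtain j where "k = int j" by (metis nonneg_int_cases not_less)
  then show ?thesis by (simp add: inv_fact_def nat_add_distrib add.commute)
qed

lemma fact_reduce2:
  assumes "2 \<le> k"
  shows "(fact k :: real) = real k * (real k - 1) * fact (k - 2)"
proof -
  have "fact k = real k * fact (k - 1)" "fact (k - 1) = real (k - 1) * (fact (k - 2) :: real)"
    using assms by (simp_all add: fact_reduce numeral_2_eq_2)
  then show ?thesis using assms by (simp add: of_nat_diff)
qed

lemma catalan_fact: "catalan k = fact (2 * k) / (fact k * fact (Suc k))"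
proof -
  have "real ((2 * k) choose k) = fact (2 * k) / (fact k * fact k)"
    using binomial_fact[of k "2 * k", where 'a = real] by (simp add: mult_2)
  then show ?thesis by (simp add: catalan_def)
qed

lemma catalan_Suc: "(real k + 2) * catalan (Suc k) = 2 * (2 * real k + 1) * catalan k"
proof -
  have "fact (2 * Suc k) = (2 * real k + 2) * (2 * real k + 1) * (fact (2 * k) :: real)"
    by (simp add: algebra_simps)
  moreover have "fact (Suc (Suc k)) = (real k + 2) * (fact (Suc k) :: real)"
    and "fact (Suc k) = (real k + 1) * (fact k :: real)" by simp_all
  moreover have "(fact k :: real) \<noteq> 0" "real k + 1 \<noteq> 0" "real k + 2 \<noteq> 0" by simp_all
  ultimately show ?thesis
    unfolding catalan_fact by (simp add: divide_simps) (simp add: algebra_simps)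
qed

text \<open>
  The junk values of the truncated subtractions are harmless:
  \<open>inv_fact\<close> kills every \<open>d > min n m\<close>, and at \<open>2 d = n + m\<close> the first real
  factor vanishes.
\<close>

definition summand :: "nat \<Rightarrow> nat \<Rightarrow> nat \<Rightarrow> real" where
  "summand n m d = - ((-4) ^ d / 2)
     * (real n + real m - 2 * real d) * (real n + real m - 2 * real d - 1)
     * fact (n + m - d - 2) * catalan ((n + m) div 2 - d - 1)
     * inv_fact (int n - int d) * inv_fact (int m - int d) * inv_fact (int d)"

lemma summand_eq_0:
  assumes "n < d \<or> m < d \<or> n + m \<le> 2 * d"
  shows "summand n m d = 0"
proof (cases "n < d \<or> m < d")
  case True
  then have "int n - int d < 0 \<or> int m - int d < 0" by auto
  then show ?thesis by (auto simp: summand_def inv_fact_neg)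
next
  case False
  with assms have "real n + real m - 2 * real d = 0" by linarith
  then show ?thesis by (simp add: summand_def)
qed

lemma summand_eq_quotient:
  assumes "d \<le> n" "d \<le> m"
  shows "summand n m d = - ((-4) ^ d / 2)
     * (real n + real m - 2 * real d) * (real n + real m - 2 * real d - 1)
     * fact (n + m - d - 2) * catalan ((n + m) div 2 - d - 1) / (fact (n - d) * fact (m - d) * fact d)"
proof -
  have "inv_fact (int n - int d) = 1 / fact (n - d)" "inv_fact (int m - int d) = 1 / fact (m - d)"
    using inv_fact_of_nat[of "n - d"] inv_fact_of_nat[of "m - d"] assms by (simp_all add: of_nat_diff)
  then show ?thesis
    unfolding summand_def inv_fact_of_nat by simp
qed

lemma summand_commute: "summand n m d = summand m n d"
  unfolding summand_def by (simp add: ac_simps)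

lemma two_powi_odd: "(2::real) powi (2 * int d - 1) = 4 ^ d / 2"
proof -
  have "(2::real) powi (2 * int d) = 4 ^ d"
    using power_int_of_nat[of "2::real" "2 * d"] by (simp add: power_mult)
  then show ?thesis by (simp add: power_int_diff)
qed

lemma multinom3_term_eq_summand:
  assumes "even (n + m)" "d \<le> min n m"
  shows "(-1) ^ (d + 1) * (2::real) powi (2 * int d - 1)
      * ((real n + real m - 2 * real d) / (real n + real m - real d))
      * ((real n + real m - 2 * real d - 1) / (real n + real m - real d - 1))
      * multinom3 (n + m - d) (n - d) (m - d) d
      * catalan (nat (int ((n + m) div 2) - int d - 1))
    = summand n m d"
proof (cases "n + m = 2 * d")
  case True
  then have "real n + real m - 2 * real d = 0" by linarith
  then show ?thesis by (simp add: summand_def)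
next
  case False
  moreover have "2 * d \<le> n + m" using assms(2) by simp
  ultimately have N: "2 * d + 2 \<le> n + m" using assms(1) by presburger
  have idx: "nat (int ((n + m) div 2) - int d - 1) = (n + m) div 2 - d - 1"
    using N by simp
  have fact: "fact (n + m - d) = (real n + real m - real d) * (real n + real m - real d - 1)
      * fact (n + m - d - 2)"
    using fact_reduce2[of "n + m - d"] N by (simp add: of_nat_diff)
  have nz: "real n + real m - real d \<noteq> 0" "real n + real m - real d - 1 \<noteq> 0"
    using N by linarith+
  have "X \<noteq> 0 \<Longrightarrow> Y \<noteq> 0 \<Longrightarrow>
      s * (A / X) * (B / Y) * (X * Y * F / D) * C = s * A * B * F * C / D"
    for s A B F D C X Y :: real
    by (simp add: field_simps)
  from this[OF nz] have cancel: "s * (A / (real n + real m - real d)) * (B / (real n + real m - real d - 1))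
      * ((real n + real m - real d) * (real n + real m - real d - 1) * F / D) * C
      = s * A * B * F * C / D" for s A B F D C :: real .
  have sign: "(-1) ^ (d + 1) * (4 ^ d / 2) = - ((-4::real) ^ d / 2)"
    by (simp flip: power_mult_distrib)
  show ?thesis
    unfolding two_powi_odd multinom3_def idx fact cancel sign
    using assms(2) by (simp add: summand_eq_quotient)
qed

definition wz_cert :: "nat \<Rightarrow> nat \<Rightarrow> nat \<Rightarrow> real" where
  "wz_cert n m d = real d * (2 * real d - 2 * real n - real m) / (real n + real m - 1 - real d)
     * summand (Suc n) m d"

text \<open>
  Away from the boundary, i.e. for \<open>n + 1 + m = 2 (d + k + 2)\<close>, the three summands in the
  recurrence are polynomial multiples of this common hypergeometric factor.
\<close>

definition summand_base :: "nat \<Rightarrow> nat \<Rightarrow> nat \<Rightarrow> nat \<Rightarrow> real" where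
  "summand_base n m d k = - ((-4) ^ d / 2) * fact (2 * k + d) * catalan k
     * inv_fact (int n + 1 - int d) * inv_fact (int m - int d) * inv_fact (int d + 1)"

lemma summand_Suc_eq_base:
  assumes H: "n + 1 + m = 2 * (d + k + 2)"
  shows "summand (Suc n) m d = 4 * (2 * real k + 3) * (2 * real k + 1) * (2 * real k + real d + 2)
      * (2 * real k + real d + 1) * (real d + 1) * summand_base n m d k"
proof -
  have idx: "Suc n + m - d - 2 = 2 * k + d + 2" "(Suc n + m) div 2 - d - 1 = Suc k"
    and idx': "real (Suc n) + real m - 2 * real d = 2 * real k + 4"
    and idx'': "int (Suc n) - int d = int n + 1 - int d" "2 * real k + 4 - 1 = 2 * real k + 3"
    using H by simp_all
  have fact: "fact (2 * k + d + 2)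
      = (2 * real k + real d + 2) * (2 * real k + real d + 1) * fact (2 * k + d)"
    by (simp add: algebra_simps)
  have inv_d: "inv_fact (int d) = (real d + 1) * inv_fact (int d + 1)"
    using inv_fact_rec[of "int d"] by simp
  have cat: "(2 * real k + 4) * catalan (Suc k) = 4 * (2 * real k + 1) * catalan k"
    using catalan_Suc[of k] by (simp add: algebra_simps)
  have "summand (Suc n) m d = - ((-4) ^ d / 2) * (2 * real k + 3) * ((2 * real k + 4) * catalan (Suc k))
      * ((2 * real k + real d + 2) * (2 * real k + real d + 1) * fact (2 * k + d))
      * inv_fact (int n + 1 - int d) * inv_fact (int m - int d) * ((real d + 1) * inv_fact (int d + 1))"
    unfolding summand_def idx idx' idx'' fact inv_d by (simp only: mult_ac)
  then show ?thesis
    unfolding cat summand_base_def by (simp only: mult_ac)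
qed

lemma summand_Suc_Suc_eq_base:
  assumes H: "n + 1 + m = 2 * (d + k + 2)"
  shows "summand (Suc n) m (Suc d) = - 4 * (2 * real k + 2) * (2 * real k + 1) * (2 * real k + real d + 1)
      * (real n + 1 - real d) * (real m - real d) * summand_base n m d k"
proof -
  have idx: "Suc n + m - Suc d - 2 = 2 * k + d + 1" "(Suc n + m) div 2 - Suc d - 1 = k"
    and idx': "real (Suc n) + real m - 2 * real (Suc d) = 2 * real k + 2"
    and idx'': "int (Suc d) = int d + 1" "int (Suc n) - (int d + 1) = int n - int d"
      "int m - (int d + 1) = int m - int d - 1"
    using H by simp_all
  have fact: "fact (2 * k + d + 1) = (2 * real k + real d + 1) * fact (2 * k + d)"
    by (simp add: algebra_simps)
  have inv_n: "inv_fact (int n - int d) = (real n + 1 - real d) * inv_fact (int n + 1 - int d)"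
    using inv_fact_rec[of "int n - int d"] by (simp add: algebra_simps)
  have inv_m: "inv_fact (int m - int d - 1) = (real m - real d) * inv_fact (int m - int d)"
    using inv_fact_rec[of "int m - int d - 1"] by simp
  have "summand (Suc n) m (Suc d) = - 4 * (- ((-4) ^ d / 2)) * (2 * real k + 2) * (2 * real k + 1)
      * ((2 * real k + real d + 1) * fact (2 * k + d)) * catalan k
      * ((real n + 1 - real d) * inv_fact (int n + 1 - int d))
      * ((real m - real d) * inv_fact (int m - int d)) * inv_fact (int d + 1)"
    unfolding summand_def idx idx' idx'' fact inv_n inv_m by simp
  then show ?thesis
    unfolding summand_base_def by (simp only: mult_ac)
qed

lemma summand_pred_eq_base:
  assumes "1 \<le> n" and H: "n + 1 + m = 2 * (d + k + 2)"
  shows "summand (n - 1) m d = (2 * real k + 2) * (2 * real k + 1) * (real n - real d)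
      * (real n + 1 - real d) * (real d + 1) * summand_base n m d k"
proof -
  have idx: "n - 1 + m - d - 2 = 2 * k + d" "(n - 1 + m) div 2 - d - 1 = k"
    and idx': "real (n - 1) + real m - 2 * real d = 2 * real k + 2"
    and idx'': "int (n - 1) - int d = int n - int d - 1"
    using H \<open>1 \<le> n\<close> by (simp_all add: of_nat_diff)
  have inv_d: "inv_fact (int d) = (real d + 1) * inv_fact (int d + 1)"
    using inv_fact_rec[of "int d"] by simp
  have inv_n: "inv_fact (int n - int d - 1)
      = (real n - real d) * ((real n + 1 - real d) * inv_fact (int n + 1 - int d))"
    using inv_fact_rec[of "int n - int d - 1"] inv_fact_rec[of "int n - int d"]
    by (simp add: algebra_simps)
  have "summand (n - 1) m d = - ((-4) ^ d / 2) * (2 * real k + 2) * (2 * real k + 1)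
      * fact (2 * k + d) * catalan k
      * ((real n - real d) * ((real n + 1 - real d) * inv_fact (int n + 1 - int d)))
      * inv_fact (int m - int d) * ((real d + 1) * inv_fact (int d + 1))"
    unfolding summand_def idx idx' idx'' inv_n inv_d by (simp add: algebra_simps)
  then show ?thesis
    unfolding summand_base_def by (simp add: mult_ac)
qed

lemma wz_polynomial_identity:
  fixes n m d k :: "'a::comm_ring_1"
  assumes "m = 2 * d + 2 * k + 3 - n"
  shows "(n + 1) * (2 * k + 3) * (2 * k + d + 2) * (2 * k + d + 1)
           - (n - 2) * (2 * k + 2) * (n - d) * (n + 1 - d)
         = (2 * n + m - 2 * d - 2) * (2 * k + 2) * (n + 1 - d) * (m - d)
           + d * (2 * n + m - 2 * d) * (2 * k + 3) * (2 * k + d + 1)"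
  unfolding assms by (simp add: algebra_simps)

lemma summand_telescoping_generic:
  assumes "1 \<le> n" and H: "n + 1 + m = 2 * (d + k + 2)"
  shows "(real n + 1) * summand (Suc n) m d - 4 * (real n - 2) * summand (n - 1) m d
         = wz_cert n m (Suc d) - wz_cert n m d"
proof -
  define Z where "Z = summand_base n m d k"
  note T = summand_Suc_eq_base[OF H] summand_Suc_Suc_eq_base[OF H] summand_pred_eq_base[OF assms]
  have m: "real m = 2 * real d + 2 * real k + 3 - real n"
    and den0: "real n + real m - 1 - real d = 2 * real k + real d + 2"
    and den1: "real n + real m - 1 - real (Suc d) = 2 * real k + real d + 1"
    using H by (simp_all add: algebra_simps)
  have cert1: "wz_cert n m (Suc d) = 4 * (2 * real k + 1) * (real d + 1) * Z
      * ((2 * real n + real m - 2 * real d - 2) * (2 * real k + 2)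
         * (real n + 1 - real d) * (real m - real d))"
    unfolding wz_cert_def T den1 Z_def by (simp add: field_simps)
  have cert0: "wz_cert n m d = - 4 * (2 * real k + 1) * (real d + 1) * Z
      * (real d * (2 * real n + real m - 2 * real d) * (2 * real k + 3) * (2 * real k + real d + 1))"
    unfolding wz_cert_def T den0 Z_def by (simp add: field_simps)
  have "(real n + 1) * summand (Suc n) m d - 4 * (real n - 2) * summand (n - 1) m d
      = 4 * (2 * real k + 1) * (real d + 1) * Z
        * ((real n + 1) * (2 * real k + 3) * (2 * real k + real d + 2) * (2 * real k + real d + 1)
           - (real n - 2) * (2 * real k + 2) * (real n - real d) * (real n + 1 - real d))"
    unfolding T Z_def by (simp add: algebra_simps)
  also have "\<dots> = 4 * (2 * real k + 1) * (real d + 1) * Z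
      * ((2 * real n + real m - 2 * real d - 2) * (2 * real k + 2)
           * (real n + 1 - real d) * (real m - real d)
         + real d * (2 * real n + real m - 2 * real d) * (2 * real k + 3) * (2 * real k + real d + 1))"
    unfolding wz_polynomial_identity[OF m] ..
  also have "\<dots> = wz_cert n m (Suc d) - wz_cert n m d"
    unfolding cert1 cert0 by (simp add: algebra_simps)
  finally show ?thesis .
qed

lemma summand_telescoping:
  assumes "1 \<le> n" "1 \<le> m" and H: "n + 1 + m = 2 * H"
  shows "(real n + 1) * summand (Suc n) m d - 4 * (real n - 2) * summand (n - 1) m d
         = wz_cert n m (Suc d) - wz_cert n m d"
proof -
  have "m < d \<or> n + 1 < d \<or> H \<le> d \<or> H = d + 1 \<or> H = d + (H - d - 2) + 2" by linarith
  then consider (vanish) "m < d \<or> n + 1 < d \<or> H \<le> d" | (top) "H = d + 1"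
    | (generic) k where "H = d + k + 2"
    by blast
  then show ?thesis
  proof cases
    case vanish
    then have "summand (Suc n) m d = 0" "summand (Suc n) m (Suc d) = 0" "summand (n - 1) m d = 0"
      using H by (auto intro!: summand_eq_0)
    then show ?thesis by (simp add: wz_cert_def)
  next
    case top
    then have "summand (Suc n) m (Suc d) = 0" "summand (n - 1) m d = 0"
      using H \<open>1 \<le> n\<close> by (auto intro!: summand_eq_0)
    moreover have den: "real n + real m - 1 - real d = real d"
      and num: "2 * real d - 2 * real n - real m = - (real n + 1)"
      using H top by (simp_all add: algebra_simps)
    moreover have "d \<noteq> 0" using top H assms by auto
    ultimately show ?thesis unfolding wz_cert_def den num by (simp add: field_simps)
  next
    case generic
    with H show ?thesis using summand_telescoping_generic[OF \<open>1 \<le> n\<close>] by simp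
  qed
qed

definition summand_sum :: "nat \<Rightarrow> nat \<Rightarrow> real" where
  "summand_sum n m = (\<Sum>d = 0..min n m. summand n m d)"

lemma summand_sum_eq_sum_lessThan:
  assumes "min n m < B"
  shows "summand_sum n m = (\<Sum>d<B. summand n m d)"
  unfolding summand_sum_def
  by (rule sum.mono_neutral_left) (use assms in \<open>auto intro!: summand_eq_0\<close>)

lemma summand_sum_commute: "summand_sum n m = summand_sum m n"
  unfolding summand_sum_def by (simp add: summand_commute min.commute)

lemma summand_sum_recurrence:
  assumes "1 \<le> n" "1 \<le> m" "even (n + 1 + m)"
  shows "(real n + 1) * summand_sum (Suc n) m = 4 * (real n - 2) * summand_sum (n - 1) m"
proof -
  obtain H where H: "n + 1 + m = 2 * H" using assms(3) by (rule evenE)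
  define B where "B = n + m + 2"
  have "summand_sum (Suc n) m = (\<Sum>d<B. summand (Suc n) m d)"
    and "summand_sum (n - 1) m = (\<Sum>d<B. summand (n - 1) m d)"
    by (rule summand_sum_eq_sum_lessThan, simp add: B_def)+
  then have "(real n + 1) * summand_sum (Suc n) m - 4 * (real n - 2) * summand_sum (n - 1) m
      = (\<Sum>d<B. (real n + 1) * summand (Suc n) m d - 4 * (real n - 2) * summand (n - 1) m d)"
    by (simp add: sum_subtractf sum_distrib_left)
  also have "\<dots> = (\<Sum>d<B. wz_cert n m (Suc d) - wz_cert n m d)"
    using summand_telescoping[OF assms(1,2) H] by simp
  also have "\<dots> = wz_cert n m B - wz_cert n m 0"
    by (rule sum_lessThan_telescope)
  also have "\<dots> = 0"
    by (simp add: wz_cert_def B_def summand_eq_0)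
  finally show ?thesis by simp
qed

text \<open>
  \<open>catalan_coeff k\<close> is the coefficient of \<open>x\<^sup>k\<close> in \<open>-\<surd>(1 - 4x\<^sup>2) / 2\<close>; the value
  \<open>-1/2\<close> at \<open>0\<close> makes its recurrence hold from \<open>n = 1\<close> on.
\<close>

definition catalan_coeff :: "nat \<Rightarrow> real" where
  "catalan_coeff k = (if k = 0 then - 1 / 2 else if even k then catalan (k div 2 - 1) else 0)"

lemma catalan_coeff_recurrence:
  assumes "1 \<le> n"
  shows "(real n + 1) * catalan_coeff (Suc n) = 4 * (real n - 2) * catalan_coeff (n - 1)"
proof (cases "even n")
  case True
  with assms show ?thesis by (auto simp: catalan_coeff_def)
next
  case False
  then obtain k where n: "n = 2 * k + 1" by (rule oddE)
  show ?thesis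
  proof (cases k)
    case 0
    with n show ?thesis by (simp add: catalan_coeff_def catalan_def)
  next
    case (Suc j)
    with n have "catalan_coeff (Suc n) = catalan (Suc j)" "catalan_coeff (n - 1) = catalan j"
      by (simp_all add: catalan_coeff_def)
    with n Suc show ?thesis using catalan_Suc[of j] by (simp add: algebra_simps)
  qed
qed

lemma summand_sum_0:
  assumes "even m" "2 \<le> m"
  shows "summand_sum 0 m = catalan_coeff 0 * catalan_coeff m"
proof -
  have "m = 2 * ((m - 2) div 2) + 2" using assms by presburger
  then obtain j where m: "m = 2 * j + 2" by blast
  have "fact m = real m * (real m - 1) * fact (m - 2)"
    using fact_reduce2 assms(2) .
  moreover have "real m * (real m - 1) \<noteq> 0" using m by simp
  ultimately have "summand 0 m 0 = - catalan j / 2"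
    using summand_eq_quotient[of 0 0 m] m by simp
  then show ?thesis by (simp add: summand_sum_def catalan_coeff_def m)
qed

lemma summand_sum_1:
  assumes "odd m" "3 \<le> m"
  shows "summand_sum 1 m = 0"
proof -
  have "m = 2 * ((m - 3) div 2) + 3" using assms by presburger
  then obtain j where m: "m = 2 * j + 3" by blast
  have fact_m: "fact m = real m * fact (m - 1)" and fact_m1: "fact (m - 1) = (real m - 1) * fact (m - 2)"
    using m by (simp_all add: fact_reduce of_nat_diff)
  have idx: "(1 + m) div 2 - 0 - 1 = Suc j" "(1 + m) div 2 - 1 - 1 = j"
    "1 + m - 0 - 2 = m - 1" "1 + m - 1 - 2 = m - 2" "m - 0 = m"
    using m by simp_all
  have "real m \<noteq> 0" "real m - 1 \<noteq> 0" using m by simp_all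
  have "summand 1 m 0 = - (1 / 2) * (real m + 1) * catalan (Suc j)"
    by (subst summand_eq_quotient[of 0 1 m, unfolded idx fact_m])
      (use \<open>real m \<noteq> 0\<close> in \<open>simp_all add: field_simps\<close>)
  moreover have "summand 1 m 1 = 2 * (real m - 2) * catalan j"
    by (subst summand_eq_quotient[of 1 1 m, unfolded idx fact_m1])
      (use \<open>real m - 1 \<noteq> 0\<close> \<open>3 \<le> m\<close> in \<open>simp_all add: field_simps\<close>)
  ultimately show ?thesis using catalan_Suc[of j] m
    by (simp add: summand_sum_def atLeast0_atMost_Suc algebra_simps)
qed

lemma summand_sum_eq_catalan_coeff:
  assumes "2 \<le> m" "even (n + m)"
  shows "summand_sum n m = catalan_coeff n * catalan_coeff m"
  using assms(2)
proof (induction n rule: nat_induct2)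
  case 0
  then show ?case using summand_sum_0 assms(1) by simp
next
  case 1
  then have "odd m" "3 \<le> m" using assms(1) by presburger+
  then show ?case using summand_sum_1[of m] by (simp add: catalan_coeff_def)
next
  case (step k)
  have rec: "(real k + 2) * catalan_coeff (k + 2) = 4 * (real k - 1) * catalan_coeff k"
    using catalan_coeff_recurrence[of "Suc k"] by (simp add: algebra_simps)
  have "(real k + 2) * summand_sum (k + 2) m = 4 * (real k - 1) * summand_sum k m"
    using summand_sum_recurrence[of "Suc k" m] step.prems assms(1) by (simp add: algebra_simps)
  also have "\<dots> = 4 * (real k - 1) * catalan_coeff k * catalan_coeff m"
    using step by simp
  also have "\<dots> = (real k + 2) * (catalan_coeff (k + 2) * catalan_coeff m)"
    unfolding rec[symmetric] by (rule mult.assoc)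
  finally show ?case by simp
qed

theorem corollary4p2:
  fixes n m :: nat
  assumes "n \<ge> 1" and "m \<ge> 1" and "\<not> (n = 1 \<and> m = 1)"
    and "n mod 2 = m mod 2"
  shows "(\<Sum>d = 0..min n m.
            (-1) ^ (d + 1) * (2::real) powi (2 * int d - 1)
            * ((real n + real m - 2 * real d) / (real n + real m - real d))
            * ((real n + real m - 2 * real d - 1) / (real n + real m - real d - 1))
            * multinom3 (n + m - d) (n - d) (m - d) d
            * catalan (nat (int ((n + m) div 2) - int d - 1)))
         = (if even n \<and> even m then catalan (n div 2 - 1) * catalan (m div 2 - 1) else 0)"
proof -
  have ev: "even (n + m)" using assms(4) by presburger
  have "(\<Sum>d = 0..min n m.
            (-1) ^ (d + 1) * (2::real) powi (2 * int d - 1)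
            * ((real n + real m - 2 * real d) / (real n + real m - real d))
            * ((real n + real m - 2 * real d - 1) / (real n + real m - real d - 1))
            * multinom3 (n + m - d) (n - d) (m - d) d
            * catalan (nat (int ((n + m) div 2) - int d - 1)))
      = summand_sum n m"
    unfolding summand_sum_def by (intro sum.cong refl multinom3_term_eq_summand[OF ev]) simp
  also have "\<dots> = catalan_coeff n * catalan_coeff m"
  proof (cases "2 \<le> m")
    case True
    then show ?thesis using ev by (rule summand_sum_eq_catalan_coeff)
  next
    case False
    with assms have "m = 1" "2 \<le> n" by presburger+
    then show ?thesis
      using summand_sum_eq_catalan_coeff[of n 1] ev by (simp add: summand_sum_commute[of n])
  qed
  also have "\<dots> = (if even n \<and> even m then catalan (n div 2 - 1) * catalan (m div 2 - 1) else 0)"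
    using assms(1,2) by (auto simp: catalan_coeff_def)
  finally show ?thesis .
qed

end
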